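(* Let $(\mathcal H,\mathfrak A_0)$ be a Hilbert quasi *-algebra satisfying condition (P), and assume that $\mathcal H^+_{wb}:=\{\xi\in\mathcal H_b:\langle\xi x,x\rangle\ge0\ \forall x\in\mathfrak A_0\}\subseteq\mathcal H^+$. Then $\mathcal H^+=\mathcal H^+_w$.
   Context: A Hilbert algebra is a *-algebra $\mathfrak A_0$ with an inner product $\langle\cdot,\cdot\rangle$ such that (i) for each $x$, $y\mapsto xy$ is continuous for the inner product norm; (ii) $\langle xy,z\rangle=\langle y,x^*z\rangle$ for all $x,y,z$; (iii) $\langle x,y\rangle=\langle y^*,x^*\rangle$ for all $x,y$; (iv) the linear span of $\{xy:x,y\in\mathfrak A_0\}$ is dense in $\mathfrak A_0$. Let $\mathcal H$ be the Hilbert space completion of $\mathfrak A_0$; the involution extends isometrically to $\mathcal H$, and the products $\xi x$, $x\xi$ for $\xi\in\mathcal H$, $x\in\mathfrak A_0$ are defined by continuity. It is assumed that (A): if $\xi\in\mathcal H$ and $\xi x=0$ for all $x\in\mathfrak A_0$ then $\xi=0$. With these operations $(\mathcal H,\mathfrak A_0)$ is called a Hilbert quasi *-algebra. $\xi\in\mathcal H$ is bounded if $x\mapsto\xi x$ is bounded on $\mathfrak A_0$; $\mathcal H_b$ is the set of bounded elements. $\mathfrak A_0^+=\{\sum_{k=1}^n x_k^*x_k: x_k\in\mathfrak A_0,n\in\mathbb N\}$, $\mathcal H^+$ is its norm closure in $\mathcal H$, and $\mathcal H^+_w=\{\xi\in\mathcal H:\langle\xi x,x\rangle\ge0\ \forall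 x\in\mathfrak A_0\}$. A linear functional $\omega$ on $\mathcal H$ is representable if (L.1) $\omega(x^*x)\ge0$ for all $x\in\mathfrak A_0$; (L.2) $\omega(y^*\xi^*x)=\overline{\omega(x^*\xi y)}$ for all $x,y\in\mathfrak A_0$, $\xi\in\mathcal H$; (L.3) for every $\xi\in\mathcal H$ there is $\gamma_\xi>0$ with $|\omega(\xi^*x)|\le\gamma_\xi\,\omega(x^*x)^{1/2}$ for all $x\in\mathfrak A_0$; $\mathcal R_c(\mathcal H,\mathfrak A_0)$ is the set of continuous representable functionals. Condition (P): if $\xi\in\mathcal H$ and $\omega(x^*\xi x)\ge0$ for every $\omega\in\mathcal R_c(\mathcal H,\mathfrak A_0)$ and every $x\in\mathfrak A_0$, then $\xi\in\mathcal H^+$. *)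

theory Defs
  imports Complex_Main
begin

text \<open>A Hilbert quasi *-algebra (H, A0) is modelled on a type 'h (the Hilbert space H,
  whose additive group structure is the type class structure) together with
  a complex scalar multiplication smul, an inner product ip (linear in the first
  argument), an involution star on H, a multiplication mul (only meaningful when at least
  one argument is in A0), and the subset A0 of 'h.\<close>

definition hnorm :: "('h \<Rightarrow> 'h \<Rightarrow> complex) \<Rightarrow> 'h \<Rightarrow> real" where
  "hnorm ip x = sqrt (Re (ip x x))"

definition cnonneg :: "complex \<Rightarrow> bool" where
  "cnonneg z \<longleftrightarrow> Im z = 0 \<and> 0 \<le> Re z"

definition clinear_map ::
  "(complex \<Rightarrow> 'h::ab_group_add \<Rightarrow> 'h) \<Rightarrow> ('h \<Rightarrow> 'h) \<Rightarrow> bool" where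
  "clinear_map smul f \<longleftrightarrow>
     (\<forall>x y. f (x + y) = f x + f y) \<and> (\<forall>c x. f (smul c x) = smul c (f x))"

definition hbounded_map ::
  "('h \<Rightarrow> 'h \<Rightarrow> complex) \<Rightarrow> ('h \<Rightarrow> 'h) \<Rightarrow> bool" where
  "hbounded_map ip f \<longleftrightarrow> (\<exists>C. \<forall>x. hnorm ip (f x) \<le> C * hnorm ip x)"

definition hilbert_quasi_star_algebra ::
  "(complex \<Rightarrow> 'h::ab_group_add \<Rightarrow> 'h) \<Rightarrow> ('h \<Rightarrow> 'h \<Rightarrow> complex) \<Rightarrow> ('h \<Rightarrow> 'h)
   \<Rightarrow> ('h \<Rightarrow> 'h \<Rightarrow> 'h) \<Rightarrow> 'h set \<Rightarrow> bool" where
  "hilbert_quasi_star_algebra smul ip star mul A0 \<longleftrightarrow>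
     \<comment> \<open>complex vector space\<close>
     (\<forall>c x y. smul c (x + y) = smul c x + smul c y) \<and>
     (\<forall>c d x. smul (c + d) x = smul c x + smul d x) \<and>
     (\<forall>c d x. smul (c * d) x = smul c (smul d x)) \<and>
     (\<forall>x. smul 1 x = x) \<and>
     \<comment> \<open>inner product, linear in the first argument\<close>
     (\<forall>x y z. ip (x + y) z = ip x z + ip y z) \<and>
     (\<forall>c x y. ip (smul c x) y = c * ip x y) \<and>
     (\<forall>x y. ip y x = cnj (ip x y)) \<and>
     (\<forall>x. 0 \<le> Re (ip x x)) \<and>
     (\<forall>x. ip x x = 0 \<longrightarrow> x = 0) \<and>
     \<comment> \<open>completeness (H is a Hilbert space)\<close>
     (\<forall>X :: nat \<Rightarrow> 'h. (\<forall>e>0. \<exists>N. \<forall>m\<ge>N. \<forall>n\<ge>N. hnorm ip (X m - X n) < e) \<longrightarrow>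
        (\<exists>L. \<forall>e>0. \<exists>N. \<forall>n\<ge>N. hnorm ip (X n - L) < e)) \<and>
     \<comment> \<open>A0 is a dense complex subspace closed under product and involution\<close>
     0 \<in> A0 \<and>
     (\<forall>x\<in>A0. \<forall>y\<in>A0. x + y \<in> A0) \<and>
     (\<forall>c. \<forall>x\<in>A0. smul c x \<in> A0) \<and>
     (\<forall>x\<in>A0. \<forall>y\<in>A0. mul x y \<in> A0) \<and>
     (\<forall>x\<in>A0. star x \<in> A0) \<and>
     (\<forall>\<xi> e. e > 0 \<longrightarrow> (\<exists>x\<in>A0. hnorm ip (\<xi> - x) < e)) \<and>
     \<comment> \<open>*-algebra structure on A0 (bilinearity comes from the linearity below)\<close>
     (\<forall>x\<in>A0. \<forall>y\<in>A0. \<forall>z\<in>A0. mul (mul x y) z = mul x (mul y z)) \<and>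
     (\<forall>x\<in>A0. \<forall>y\<in>A0. star (mul x y) = mul (star y) (star x)) \<and>
     \<comment> \<open>the involution on H: antilinear, involutive, isometric (hence the continuous
        extension of the involution of A0)\<close>
     (\<forall>\<xi> \<eta>. star (\<xi> + \<eta>) = star \<xi> + star \<eta>) \<and>
     (\<forall>c \<xi>. star (smul c \<xi>) = smul (cnj c) (star \<xi>)) \<and>
     (\<forall>\<xi>. star (star \<xi>) = \<xi>) \<and>
     (\<forall>\<xi>. hnorm ip (star \<xi>) = hnorm ip \<xi>) \<and>
     \<comment> \<open>products \<xi>x and x\<xi> (x in A0): linear and continuous in \<xi>, extending the product
        of A0; this includes Hilbert algebra axiom (i)\<close>
     (\<forall>x\<in>A0. clinear_map smul (\<lambda>\<xi>. mul \<xi> x) \<and> hbounded_map ip (\<lambda>\<xi>. mul \<xi> x)) \<and>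
     (\<forall>x\<in>A0. clinear_map smul (\<lambda>\<xi>. mul x \<xi>) \<and> hbounded_map ip (\<lambda>\<xi>. mul x \<xi>)) \<and>
     \<comment> \<open>Hilbert algebra axioms (ii), (iii), (iv)\<close>
     (\<forall>x\<in>A0. \<forall>y\<in>A0. \<forall>z\<in>A0. ip (mul x y) z = ip y (mul (star x) z)) \<and>
     (\<forall>x\<in>A0. \<forall>y\<in>A0. ip x y = ip (star y) (star x)) \<and>
     (\<forall>z\<in>A0. \<forall>e>0. \<exists>ps :: (complex \<times> 'h \<times> 'h) list.
        (\<forall>(c, x, y) \<in> set ps. x \<in> A0 \<and> y \<in> A0) \<and>
        hnorm ip (z - sum_list (map (\<lambda>(c, x, y). smul c (mul x y)) ps)) < e) \<and>
     \<comment> \<open>condition (A)\<close>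
     (\<forall>\<xi>. (\<forall>x\<in>A0. mul \<xi> x = 0) \<longrightarrow> \<xi> = 0)"

definition bounded_elems ::
  "('h \<Rightarrow> 'h \<Rightarrow> complex) \<Rightarrow> ('h \<Rightarrow> 'h \<Rightarrow> 'h) \<Rightarrow> 'h set \<Rightarrow> 'h set" where
  "bounded_elems ip mul A0 = {\<xi>. \<exists>C. \<forall>x\<in>A0. hnorm ip (mul \<xi> x) \<le> C * hnorm ip x}"

definition A0_plus ::
  "('h::ab_group_add \<Rightarrow> 'h) \<Rightarrow> ('h \<Rightarrow> 'h \<Rightarrow> 'h) \<Rightarrow> 'h set \<Rightarrow> 'h set" where
  "A0_plus star mul A0 =
     {sum_list (map (\<lambda>x. mul (star x) x) xs) | xs. xs \<noteq> [] \<and> set xs \<subseteq> A0}"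

definition H_plus ::
  "('h::ab_group_add \<Rightarrow> 'h \<Rightarrow> complex) \<Rightarrow> ('h \<Rightarrow> 'h) \<Rightarrow> ('h \<Rightarrow> 'h \<Rightarrow> 'h) \<Rightarrow> 'h set \<Rightarrow> 'h set" where
  "H_plus ip star mul A0 =
     {\<xi>. \<forall>e>0. \<exists>a\<in>A0_plus star mul A0. hnorm ip (\<xi> - a) < e}"

definition H_plus_w ::
  "('h \<Rightarrow> 'h \<Rightarrow> complex) \<Rightarrow> ('h \<Rightarrow> 'h \<Rightarrow> 'h) \<Rightarrow> 'h set \<Rightarrow> 'h set" where
  "H_plus_w ip mul A0 = {\<xi>. \<forall>x\<in>A0. cnonneg (ip (mul \<xi> x) x)}"

definition H_plus_wb ::
  "('h \<Rightarrow> 'h \<Rightarrow> complex) \<Rightarrow> ('h \<Rightarrow> 'h \<Rightarrow> 'h) \<Rightarrow> 'h set \<Rightarrow> 'h set" where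
  "H_plus_wb ip mul A0 = {\<xi> \<in> bounded_elems ip mul A0. \<forall>x\<in>A0. cnonneg (ip (mul \<xi> x) x)}"

definition representable ::
  "(complex \<Rightarrow> 'h::ab_group_add \<Rightarrow> 'h) \<Rightarrow> ('h \<Rightarrow> 'h) \<Rightarrow> ('h \<Rightarrow> 'h \<Rightarrow> 'h) \<Rightarrow> 'h set
   \<Rightarrow> ('h \<Rightarrow> complex) \<Rightarrow> bool" where
  "representable smul star mul A0 \<omega> \<longleftrightarrow>
     (\<forall>\<xi> \<eta>. \<omega> (\<xi> + \<eta>) = \<omega> \<xi> + \<omega> \<eta>) \<and>
     (\<forall>c \<xi>. \<omega> (smul c \<xi>) = c * \<omega> \<xi>) \<and>
     (\<forall>x\<in>A0. cnonneg (\<omega> (mul (star x) x))) \<and>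
     (\<forall>x\<in>A0. \<forall>y\<in>A0. \<forall>\<xi>.
        \<omega> (mul (star y) (mul (star \<xi>) x)) = cnj (\<omega> (mul (star x) (mul \<xi> y)))) \<and>
     (\<forall>\<xi>. \<exists>\<gamma>>0. \<forall>x\<in>A0. cmod (\<omega> (mul (star \<xi>) x)) \<le> \<gamma> * sqrt (Re (\<omega> (mul (star x) x))))"

definition Rc ::
  "(complex \<Rightarrow> 'h::ab_group_add \<Rightarrow> 'h) \<Rightarrow> ('h \<Rightarrow> 'h \<Rightarrow> complex) \<Rightarrow> ('h \<Rightarrow> 'h)
   \<Rightarrow> ('h \<Rightarrow> 'h \<Rightarrow> 'h) \<Rightarrow> 'h set \<Rightarrow> ('h \<Rightarrow> complex) set" where
  "Rc smul ip star mul A0 =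
     {\<omega>. representable smul star mul A0 \<omega> \<and> (\<exists>C. \<forall>\<xi>. cmod (\<omega> \<xi>) \<le> C * hnorm ip \<xi>)}"

definition condition_P ::
  "(complex \<Rightarrow> 'h::ab_group_add \<Rightarrow> 'h) \<Rightarrow> ('h \<Rightarrow> 'h \<Rightarrow> complex) \<Rightarrow> ('h \<Rightarrow> 'h)
   \<Rightarrow> ('h \<Rightarrow> 'h \<Rightarrow> 'h) \<Rightarrow> 'h set \<Rightarrow> bool" where
  "condition_P smul ip star mul A0 \<longleftrightarrow>
     (\<forall>\<xi>. (\<forall>\<omega>\<in>Rc smul ip star mul A0. \<forall>x\<in>A0. cnonneg (\<omega> (mul (star x) (mul \<xi> x))))
        \<longrightarrow> \<xi> \<in> H_plus ip star mul A0)"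

end

theory Submission
  imports Defs "HOL-Analysis.Urysohn"
begin

text \<open>
  \<open>H\<^sup>+ \<subseteq> H\<^sup>+\<^sub>w\<close> because \<open>\<xi> \<mapsto> \<langle>\<xi>x, x\<rangle>\<close> is continuous and nonnegative on \<open>\<AA>\<^sub>0\<^sup>+\<close>.
  Conversely, let \<open>\<xi> \<in> H\<^sup>+\<^sub>w\<close>; by (P) it suffices that \<open>\<omega>(x\<^sup>*\<xi>x) \<ge> 0\<close> for every
  \<open>\<omega> \<in> R\<^sub>c\<close>. By the Riesz representation theorem \<open>\<omega> = \<langle>\<cdot>, \<eta>\<rangle>\<close>, and \<open>\<eta> \<in> H\<^sup>+\<^sub>w\<^sub>b\<close>:
  (L.1) gives \<open>\<langle>\<eta>u, u\<rangle> \<ge> 0\<close>, and (L.3) gives pointwise bounds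
  \<open>|\<langle>\<xi>, \<eta>u\<rangle>| \<le> \<gamma>\<^sub>\<xi> \<langle>\<eta>u, u\<rangle>\<^sup>1\<^sup>/\<^sup>2\<close>, which the uniform boundedness principle
  turns into \<open>\<parallel>\<eta>u\<parallel> \<le> c \<langle>\<eta>u, u\<rangle>\<^sup>1\<^sup>/\<^sup>2 \<le> c (\<parallel>\<eta>u\<parallel> \<parallel>u\<parallel>)\<^sup>1\<^sup>/\<^sup>2\<close>, so \<open>\<eta>\<close> is bounded.
  Hence \<open>\<eta> \<in> H\<^sup>+\<close> by hypothesis, and \<open>\<langle>x\<^sup>*\<xi>x, \<eta>\<rangle> \<ge> 0\<close> because
  \<open>\<langle>x\<^sup>*\<xi>x, y\<^sup>*y\<rangle> = \<langle>\<xi>(xy\<^sup>*), xy\<^sup>*\<rangle> \<ge> 0\<close> and \<open>\<eta>\<close> is a limit of sums of such \<open>y\<^sup>*y\<close>.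
\<close>

lemma cnonneg_add: "cnonneg a \<Longrightarrow> cnonneg b \<Longrightarrow> cnonneg (a + b)"
  by (auto simp: cnonneg_def)

lemma cnonneg_cnj: "cnonneg (cnj z) \<longleftrightarrow> cnonneg z"
  by (auto simp: cnonneg_def)

lemma cnonneg_of_approx:
  assumes "\<And>e. e > 0 \<Longrightarrow> \<exists>z. cnonneg z \<and> cmod (w - z) < e"
  shows "cnonneg w"
proof -
  have approx: "\<bar>Im w\<bar> < e \<and> - e < Re w" if e: "e > 0" for e
  proof -
    obtain z where z: "cnonneg z" "cmod (w - z) < e" using assms[OF e] by blast
    moreover have "\<bar>Im (w - z)\<bar> \<le> cmod (w - z)" "\<bar>Re (w - z)\<bar> \<le> cmod (w - z)"
      by (rule abs_Im_le_cmod, rule abs_Re_le_cmod)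
    ultimately show ?thesis by (auto simp: cnonneg_def)
  qed
  have "\<bar>Im w\<bar> \<le> 0" "0 \<le> Re w"
    by (rule field_le_epsilon; use approx in force)+
  then show ?thesis by (simp add: cnonneg_def)
qed

lemma cnonneg_sum_list:
  assumes "additive F" and "\<And>y. y \<in> set ys \<Longrightarrow> cnonneg (F (g y))"
  shows "cnonneg (F (sum_list (map g ys)))"
  using assms(2)
proof (induction ys)
  case Nil
  then show ?case using additive.zero[OF assms(1)] by (simp add: cnonneg_def)
next
  case (Cons y ys)
  then show ?case by (simp add: additive.add[OF assms(1)] cnonneg_add)
qed

lemma le_sq_mult_of_le_sqrt:
  fixes h c p n :: real
  assumes "0 \<le> c" "0 \<le> h" "0 \<le> n" "h \<le> c * sqrt p" "0 \<le> p" "p \<le> h * n"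
  shows "h \<le> c\<^sup>2 * n"
proof (cases "h = 0")
  case False
  have "h\<^sup>2 \<le> (c * sqrt p)\<^sup>2" using assms by (intro power_mono) auto
  also have "\<dots> = c\<^sup>2 * p" using assms by (simp add: power_mult_distrib)
  also have "\<dots> \<le> c\<^sup>2 * (h * n)" using assms by (intro mult_left_mono) auto
  finally have "h * h \<le> h * (c\<^sup>2 * n)" by (simp add: power2_eq_square algebra_simps)
  then show ?thesis using False assms(2) by simp
qed (use assms in auto)

text \<open>The space is not an instance of the library's inner-product classes, so the Riesz
  representation theorem and the uniform boundedness principle are derived from these axioms.\<close>

locale complex_hilbert_space =
  fixes smul :: "complex \<Rightarrow> 'h::ab_group_add \<Rightarrow> 'h"
    and ip :: "'h \<Rightarrow> 'h \<Rightarrow> complex"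
  assumes ip_add_left: "ip (x + y) z = ip x z + ip y z"
    and ip_smul_left: "ip (smul c x) y = c * ip x y"
    and ip_cnj_commute: "ip y x = cnj (ip x y)"
    and ip_self_Re_nonneg: "0 \<le> Re (ip x x)"
    and ip_self_eq_0: "ip x x = 0 \<Longrightarrow> x = 0"
    and complete: "\<And>X :: nat \<Rightarrow> 'h. (\<forall>e>0. \<exists>N. \<forall>m\<ge>N. \<forall>n\<ge>N. hnorm ip (X m - X n) < e) \<Longrightarrow>
      \<exists>L. \<forall>e>0. \<exists>N. \<forall>n\<ge>N. hnorm ip (X n - L) < e"
begin

lemma additive_ip_left: "additive (\<lambda>x. ip x z)"
  by unfold_locales (rule ip_add_left)

lemma additive_ip_right: "additive (\<lambda>z. ip x z)"
  by unfold_locales (metis ip_add_left ip_cnj_commute complex_cnj_add)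

lemmas ip_diff_left = additive.diff[OF additive_ip_left]
  and ip_minus_left = additive.minus[OF additive_ip_left]
  and ip_zero_left [simp] = additive.zero[OF additive_ip_left]
  and ip_add_right = additive.add[OF additive_ip_right]
  and ip_diff_right = additive.diff[OF additive_ip_right]
  and ip_minus_right = additive.minus[OF additive_ip_right]
  and ip_zero_right [simp] = additive.zero[OF additive_ip_right]

lemma ip_smul_right: "ip x (smul c y) = cnj c * ip x y"
  by (metis ip_cnj_commute ip_smul_left complex_cnj_mult)

lemma ip_self_real: "ip x x = complex_of_real (Re (ip x x))"
  using ip_cnj_commute[of x x] by (simp add: complex_eq_iff)

lemma cnonneg_ip_self: "cnonneg (ip x x)"
  using ip_cnj_commute[of x x] ip_self_Re_nonneg[of x] by (simp add: cnonneg_def complex_eq_iff)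

lemma hnorm_sq: "(hnorm ip x)\<^sup>2 = Re (ip x x)"
  using ip_self_Re_nonneg[of x] by (simp add: hnorm_def)

lemma hnorm_nonneg [simp]: "0 \<le> hnorm ip x"
  by (simp add: hnorm_def ip_self_Re_nonneg)

lemma hnorm_eq_0_iff [simp]: "hnorm ip x = 0 \<longleftrightarrow> x = 0"
  using ip_self_eq_0 ip_self_real[of x] ip_self_Re_nonneg[of x]
  by (auto simp: hnorm_def)

lemma hnorm_zero [simp]: "hnorm ip 0 = 0"
  by simp

lemma hnorm_less_of_sq_less: "Re (ip x x) < e\<^sup>2 \<Longrightarrow> 0 < e \<Longrightarrow> hnorm ip x < e"
  by (metis hnorm_sq hnorm_nonneg power_less_imp_less_base less_le)

lemma ip_expand:
  "ip (x + smul t y) (x + smul t y) = ip x x + cnj t * ip x y + t * ip y x + t * cnj t * ip y y"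
  by (simp add: ip_add_left ip_add_right ip_smul_left ip_smul_right algebra_simps)

lemma cauchy_schwarz: "cmod (ip x y) \<le> hnorm ip x * hnorm ip y"
proof (cases "y = 0")
  case False
  define n where "n = Re (ip y y)"
  have yy: "ip y y = complex_of_real n" unfolding n_def by (rule ip_self_real)
  have "n \<noteq> 0" using False yy ip_self_eq_0 by force
  then have n: "0 < n" using ip_self_Re_nonneg[of y] by (simp add: n_def)
  define a where "a = ip x y"
  define t where "t = - a / complex_of_real n"
  have "0 \<le> Re (ip (x + smul t y) (x + smul t y))" by (rule ip_self_Re_nonneg)
  also have "ip (x + smul t y) (x + smul t y) = ip x x - a * cnj a / complex_of_real n"
    unfolding ip_expand ip_cnj_commute[of y x] yy using n
    by (simp add: t_def a_def field_simps)
  also have "a * cnj a = complex_of_real ((cmod a)\<^sup>2)"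
    by (rule complex_norm_square[symmetric])
  finally have "(cmod a)\<^sup>2 \<le> Re (ip x x) * n" using n by (simp add: divide_le_eq)
  then have "(cmod (ip x y))\<^sup>2 \<le> (hnorm ip x * hnorm ip y)\<^sup>2"
    by (simp add: a_def n_def power_mult_distrib hnorm_sq)
  then show ?thesis by (rule power2_le_imp_le) simp
qed simp

lemma hnorm_triangle: "hnorm ip (x + y) \<le> hnorm ip x + hnorm ip y"
proof -
  have "Re (ip (x + y) (x + y)) = Re (ip x x) + Re (ip y y) + 2 * Re (ip x y)"
    using ip_cnj_commute[of x y] by (simp add: ip_add_left ip_add_right)
  also have "\<dots> \<le> Re (ip x x) + Re (ip y y) + 2 * (hnorm ip x * hnorm ip y)"
    using cauchy_schwarz[of x y] complex_Re_le_cmod[of "ip x y"] by linarith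
  also have "\<dots> = (hnorm ip x + hnorm ip y)\<^sup>2"
    by (simp add: power2_sum hnorm_sq)
  finally have "(hnorm ip (x + y))\<^sup>2 \<le> (hnorm ip x + hnorm ip y)\<^sup>2"
    by (simp add: hnorm_sq)
  then show ?thesis by (rule power2_le_imp_le) simp
qed

lemma hnorm_minus [simp]: "hnorm ip (- x) = hnorm ip x"
  by (simp add: hnorm_def ip_minus_left ip_minus_right)

lemma hnorm_minus_commute: "hnorm ip (x - y) = hnorm ip (y - x)"
  by (metis hnorm_minus minus_diff_eq)

lemma hnorm_triangle_diff: "hnorm ip (x - z) \<le> hnorm ip (x - y) + hnorm ip (y - z)"
  using hnorm_triangle[of "x - y" "y - z"] by simp

lemma hnorm_diff_le: "hnorm ip (x - y) \<le> hnorm ip x + hnorm ip y"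
  using hnorm_triangle[of x "- y"] by simp

lemma hnorm_smul: "hnorm ip (smul c x) = cmod c * hnorm ip x"
proof -
  have "ip (smul c x) (smul c x) = (c * cnj c) * ip x x"
    by (simp add: ip_smul_left ip_smul_right)
  also have "c * cnj c = complex_of_real ((cmod c)\<^sup>2)"
    by (rule complex_norm_square[symmetric])
  finally have "Re (ip (smul c x) (smul c x)) = (cmod c)\<^sup>2 * Re (ip x x)"
    by simp
  then show ?thesis by (simp add: hnorm_def real_sqrt_mult)
qed

lemma hbounded_map_nonneg_bound:
  assumes "hbounded_map ip f"
  obtains C where "0 \<le> C" "\<And>x. hnorm ip (f x) \<le> C * hnorm ip x"
proof -
  obtain C where C: "\<And>x. hnorm ip (f x) \<le> C * hnorm ip x"
    using assms by (auto simp: hbounded_map_def)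
  have "hnorm ip (f x) \<le> max C 0 * hnorm ip x" for x
    using C[of x] by (meson hnorm_nonneg max.cobounded1 mult_right_mono order_trans)
  then show ?thesis by (intro that[of "max C 0"]) auto
qed

lemma hbounded_map_lipschitz:
  assumes "clinear_map smul f" "hbounded_map ip f"
  obtains C where "0 \<le> C" "\<And>a b. hnorm ip (f a - f b) \<le> C * hnorm ip (a - b)"
proof -
  interpret f: additive f
    using assms(1) by unfold_locales (simp add: clinear_map_def)
  obtain C where "0 \<le> C" "\<And>x. hnorm ip (f x) \<le> C * hnorm ip x"
    using hbounded_map_nonneg_bound[OF assms(2)] by blast
  then show ?thesis by (intro that[of C]) (simp_all add: f.diff[symmetric])
qed

lemma clinear_map_id: "clinear_map smul (\<lambda>x. x)"
  by (simp add: clinear_map_def)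

lemma hbounded_map_id: "hbounded_map ip (\<lambda>x. x)"
  by (auto simp: hbounded_map_def intro: exI[of _ 1])

lemma clinear_map_comp:
  "clinear_map smul f \<Longrightarrow> clinear_map smul g \<Longrightarrow> clinear_map smul (\<lambda>x. g (f x))"
  by (simp add: clinear_map_def)

lemma hbounded_map_comp:
  assumes "hbounded_map ip f" "hbounded_map ip g"
  shows "hbounded_map ip (\<lambda>x. g (f x))"
proof -
  obtain C D where "0 \<le> D" "\<And>x. hnorm ip (f x) \<le> C * hnorm ip x"
    and "\<And>x. hnorm ip (g x) \<le> D * hnorm ip x"
    using hbounded_map_nonneg_bound[OF assms(1)] hbounded_map_nonneg_bound[OF assms(2)] by metis
  then have "hnorm ip (g (f x)) \<le> (D * C) * hnorm ip x" for x
    by (metis mult.assoc mult_left_mono order_trans)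
  then show ?thesis by (auto simp: hbounded_map_def)
qed

lemma cmod_ip_diff_le:
  "cmod (ip p q - ip r s) \<le> hnorm ip p * hnorm ip q + hnorm ip r * hnorm ip s"
  using norm_triangle_ineq4[of "ip p q" "ip r s"] cauchy_schwarz[of p q] cauchy_schwarz[of r s]
  by linarith

section \<open>The Riesz representation theorem\<close>

lemma abs_hnorm_diff_le: "\<bar>hnorm ip x - hnorm ip y\<bar> \<le> hnorm ip (x - y)"
  using hnorm_triangle_diff[of x 0 y] hnorm_triangle_diff[of y 0 x] hnorm_minus_commute[of x y]
  by simp

lemma complete_LIMSEQ:
  assumes "\<forall>e>0. \<exists>N. \<forall>m\<ge>N. \<forall>n\<ge>N. hnorm ip (X m - X n) < e"
  shows "\<exists>L. (\<lambda>n. hnorm ip (X n - L)) \<longlonglongrightarrow> 0"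
  using complete[OF assms] by (simp add: LIMSEQ_iff)

lemma parallelogram_law:
  "Re (ip (x - y) (x - y)) + Re (ip (x + y) (x + y)) = 2 * Re (ip x x) + 2 * Re (ip y y)"
  by (simp add: ip_add_left ip_add_right ip_diff_left ip_diff_right)

lemma min_norm_element:
  assumes "u \<in> S"
    and midpoint: "\<And>a b. a \<in> S \<Longrightarrow> b \<in> S \<Longrightarrow> smul (1/2) (a + b) \<in> S"
    and closed: "\<And>X L. (\<And>n. X n \<in> S) \<Longrightarrow> (\<lambda>n. hnorm ip (X n - L)) \<longlonglongrightarrow> 0 \<Longrightarrow> L \<in> S"
  shows "\<exists>L\<in>S. \<forall>\<eta>\<in>S. Re (ip L L) \<le> Re (ip \<eta> \<eta>)"
proof -
  define N where "N \<eta> = Re (ip \<eta> \<eta>)" for \<eta>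
  define d where "d = Inf (N ` S)"
  have bdd: "bdd_below (N ` S)"
    by (rule bdd_belowI[of _ 0]) (auto simp: N_def ip_self_Re_nonneg)
  have d_le: "d \<le> N \<eta>" if "\<eta> \<in> S" for \<eta>
    unfolding d_def using bdd that by (simp add: cInf_lower)
  have "\<exists>\<eta>\<in>S. N \<eta> < d + inverse (real (Suc n))" for n
    using cInf_less_iff[of "N ` S" "d + inverse (real (Suc n))"] bdd \<open>u \<in> S\<close>
    by (auto simp: d_def)
  then obtain X where XS: "\<And>n. X n \<in> S" and XN: "\<And>n. N (X n) < d + inverse (real (Suc n))"
    by metis
  have sum_ge: "4 * d \<le> N (X m + X n)" for m n
    using d_le[OF midpoint[OF XS XS, of m n]]
    by (simp add: N_def ip_smul_left ip_smul_right)
  have X_diff: "N (X m - X n) \<le> 2 * inverse (real (Suc m)) + 2 * inverse (real (Suc n))" for m n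
    using parallelogram_law[of "X m" "X n"] XN[of m] XN[of n] sum_ge[of m n]
    unfolding N_def by linarith
  have "\<exists>M. \<forall>m\<ge>M. \<forall>n\<ge>M. hnorm ip (X m - X n) < e" if e: "e > 0" for e
  proof -
    obtain M where M: "M > 0" "inverse (real M) < e\<^sup>2 / 4"
      using ex_inverse_of_nat_less[of "e\<^sup>2 / 4"] e by auto
    have "N (X m - X n) < e\<^sup>2" if "M \<le> m" "M \<le> n" for m n
    proof -
      have "inverse (real (Suc k)) \<le> inverse (real M)" if "M \<le> k" for k
        using that M(1) by (simp add: le_imp_inverse_le)
      then have "inverse (real (Suc m)) \<le> inverse (real M)" "inverse (real (Suc n)) \<le> inverse (real M)"
        using that by blast+
      then show ?thesis using X_diff[of m n] M(2) by linarith
    qed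
    then show ?thesis using e by (auto simp: N_def intro!: hnorm_less_of_sq_less)
  qed
  then obtain L where L: "(\<lambda>n. hnorm ip (X n - L)) \<longlonglongrightarrow> 0"
    using complete_LIMSEQ by blast
  have "(\<lambda>n. hnorm ip (X n) - hnorm ip L) \<longlonglongrightarrow> 0"
    by (rule Lim_null_comparison[OF _ L]) (simp add: abs_hnorm_diff_le)
  then have "(\<lambda>n. N (X n)) \<longlonglongrightarrow> N L"
    unfolding N_def hnorm_sq[symmetric] by (intro tendsto_power) (simp add: LIM_zero_iff)
  moreover have "(\<lambda>n. N (X n)) \<longlonglongrightarrow> d"
  proof (rule real_tendsto_sandwich)
    show "\<forall>\<^sub>F n in sequentially. d \<le> N (X n)" using d_le XS by simp
    show "\<forall>\<^sub>F n in sequentially. N (X n) \<le> d + inverse (real (Suc n))"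
      using XN by (simp add: less_imp_le)
    show "(\<lambda>n. d + inverse (real (Suc n))) \<longlonglongrightarrow> d"
      using tendsto_add[OF tendsto_const LIMSEQ_inverse_real_of_nat, of d] by simp
  qed simp
  ultimately have "N L = d" by (rule LIMSEQ_unique)
  moreover have "L \<in> S" using closed[OF XS L] .
  ultimately show ?thesis using d_le by (auto simp: N_def)
qed

lemma orthogonal_of_min_norm:
  assumes min: "\<And>t. Re (ip L L) \<le> Re (ip (L + smul t k) (L + smul t k))"
  shows "ip k L = 0"
proof -
  define a where "a = ip k L"
  define n where "n = Re (ip k k)"
  define s where "s = 1 / (n + 1)"
  have kk: "ip k k = complex_of_real n" unfolding n_def by (rule ip_self_real)
  have n: "0 \<le> n" by (simp add: n_def ip_self_Re_nonneg)
  have s: "0 < s" "s * n < 1" using n by (simp_all add: s_def)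
  have aa: "cnj a * a = complex_of_real ((cmod a)\<^sup>2)"
    using complex_norm_square[of a] by (simp add: mult.commute)
  define t where "t = - (complex_of_real s * cnj a)"
  have "ip (L + smul t k) (L + smul t k)
      = ip L L + complex_of_real (s\<^sup>2 * n - 2 * s) * (cnj a * a)"
    unfolding ip_expand ip_cnj_commute[of L k] kk a_def[symmetric]
    by (simp add: t_def algebra_simps power2_eq_square)
  then have "Re (ip (L + smul t k) (L + smul t k)) = Re (ip L L) + (s\<^sup>2 * n - 2 * s) * (cmod a)\<^sup>2"
    unfolding aa of_real_mult[symmetric] by simp
  then have "2 * s * (cmod a)\<^sup>2 \<le> s\<^sup>2 * n * (cmod a)\<^sup>2"
    using min[of t] by (simp add: algebra_simps)
  then have "2 * (cmod a)\<^sup>2 \<le> (s * n) * (cmod a)\<^sup>2"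
    using s by (simp add: power2_eq_square algebra_simps)
  also have "\<dots> \<le> (cmod a)\<^sup>2" using s n by (intro mult_left_le_one_le) auto
  finally show ?thesis by (simp add: a_def)
qed

theorem riesz_representation:
  assumes add: "\<And>a b. \<omega> (a + b) = \<omega> a + \<omega> b"
    and hom: "\<And>c a. \<omega> (smul c a) = c * \<omega> a"
    and bounded: "\<And>\<xi>. cmod (\<omega> \<xi>) \<le> C * hnorm ip \<xi>"
  shows "\<exists>\<eta>. \<forall>\<zeta>. \<omega> \<zeta> = ip \<zeta> \<eta>"
proof (cases "\<forall>\<zeta>. \<omega> \<zeta> = 0")
  case True
  then show ?thesis by (intro exI[of _ 0]) simp
next
  case False
  then obtain \<zeta>0 where "\<omega> \<zeta>0 \<noteq> 0" by blast
  interpret \<omega>: additive \<omega> by unfold_locales (rule add)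
  define S where "S = {\<eta>. \<omega> \<eta> = 1}"
  have "smul (1 / \<omega> \<zeta>0) \<zeta>0 \<in> S" using \<open>\<omega> \<zeta>0 \<noteq> 0\<close> by (simp add: S_def hom)
  moreover have "smul (1/2) (a + b) \<in> S" if "a \<in> S" "b \<in> S" for a b
    using that by (simp add: S_def hom add)
  moreover have "L \<in> S" if XS: "\<And>n. X n \<in> S" and X: "(\<lambda>n. hnorm ip (X n - L)) \<longlonglongrightarrow> 0" for X L
  proof -
    have "(\<lambda>n. \<omega> (X n) - \<omega> L) \<longlonglongrightarrow> 0"
      by (rule Lim_null_comparison[OF _ tendsto_mult_right_zero[OF X, of C]])
        (simp add: \<omega>.diff[symmetric] bounded)
    then show ?thesis using XS by (simp add: S_def LIMSEQ_const_iff)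
  qed
  ultimately obtain L where L: "L \<in> S" and min: "\<And>\<eta>. \<eta> \<in> S \<Longrightarrow> Re (ip L L) \<le> Re (ip \<eta> \<eta>)"
    using min_norm_element[of _ S] by metis
  have orth: "ip k L = 0" if "\<omega> k = 0" for k
    using that L by (intro orthogonal_of_min_norm min) (simp add: S_def add hom)
  define n where "n = Re (ip L L)"
  have LL: "ip L L = complex_of_real n" unfolding n_def by (rule ip_self_real)
  have "L \<noteq> 0" using L \<omega>.zero by (auto simp: S_def)
  then have "n \<noteq> 0" using LL ip_self_eq_0 by force
  have "\<omega> \<zeta> = ip \<zeta> (smul (1 / complex_of_real n) L)" for \<zeta>
  proof -
    have "ip (\<zeta> - smul (\<omega> \<zeta>) L) L = 0"
      using L by (intro orth) (simp add: S_def \<omega>.diff hom)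
    then have "ip \<zeta> L = \<omega> \<zeta> * complex_of_real n" by (simp add: ip_diff_left ip_smul_left LL)
    then show ?thesis using \<open>n \<noteq> 0\<close> by (simp add: ip_smul_right)
  qed
  then show ?thesis by blast
qed

end

section \<open>The uniform boundedness principle\<close>

sublocale complex_hilbert_space \<subseteq> hmetric: Metric_space UNIV "\<lambda>x y. hnorm ip (x - y)"
  by unfold_locales (simp_all add: hnorm_minus_commute hnorm_triangle_diff)

context complex_hilbert_space
begin

lemma hmetric_mcomplete: hmetric.mcomplete
  unfolding hmetric.mcomplete_def
proof (intro allI impI)
  fix X :: "nat \<Rightarrow> 'h"
  assume "hmetric.MCauchy X"
  then obtain L where "\<forall>e>0. \<exists>N. \<forall>n\<ge>N. hnorm ip (X n - L) < e"
    using complete[of X] by (auto simp: hmetric.MCauchy_def)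
  then have "limitin hmetric.mtopology X L sequentially"
    by (simp add: hmetric.limitin_metric eventually_sequentially)
  then show "\<exists>L. limitin hmetric.mtopology X L sequentially" ..
qed

lemma closedin_weak_bounds:
  "closedin hmetric.mtopology {\<xi>. \<forall>u\<in>U. cmod (ip \<xi> (w u)) \<le> r u}"
  unfolding hmetric.closedin_metric
proof (intro conjI allI impI)
  fix x assume "x \<in> UNIV - {\<xi>. \<forall>u\<in>U. cmod (ip \<xi> (w u)) \<le> r u}"
  then obtain u where u: "u \<in> U" "r u < cmod (ip x (w u))" by force
  define \<rho> where "\<rho> = (cmod (ip x (w u)) - r u) / (hnorm ip (w u) + 1)"
  have pos: "0 < hnorm ip (w u) + 1" using hnorm_nonneg[of "w u"] by linarith
  then have "0 < \<rho>" using u by (simp add: \<rho>_def)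
  moreover have "r u < cmod (ip y (w u))" if "hnorm ip (x - y) < \<rho>" for y
  proof -
    have "cmod (ip x (w u)) - cmod (ip y (w u)) \<le> cmod (ip (x - y) (w u))"
      using norm_triangle_ineq2 by (metis ip_diff_left)
    also have "\<dots> \<le> hnorm ip (x - y) * (hnorm ip (w u) + 1)"
      using cauchy_schwarz[of "x - y" "w u"]
      by (metis add_increasing2 distrib_left hnorm_nonneg mult.right_neutral)
    also have "\<dots> < \<rho> * (hnorm ip (w u) + 1)"
      using that pos by (intro mult_strict_right_mono)
    also have "\<dots> = cmod (ip x (w u)) - r u"
      using pos by (simp add: \<rho>_def)
    finally show ?thesis by simp
  qed
  ultimately show "\<exists>\<rho>>0. disjnt {\<xi>. \<forall>u\<in>U. cmod (ip \<xi> (w u)) \<le> r u} (hmetric.mball x \<rho>)"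
    using u(1) by (force simp: disjnt_def)
qed simp

text \<open>Test the bound at the centre and at a point at distance r/2 from it in the direction of w.\<close>
lemma bound_of_ball_in_weak_bound:
  assumes "0 < r" "0 \<le> c"
    and ball: "\<And>\<xi>. hnorm ip (\<xi>\<^sub>0 - \<xi>) < r \<Longrightarrow> cmod (ip \<xi> w) \<le> c"
  shows "hnorm ip w \<le> 4 * c / r"
proof (cases "w = 0")
  case False
  define h where "h = hnorm ip w"
  have h: "0 < h" using False hnorm_nonneg[of w] by (simp add: h_def less_le)
  define \<zeta> where "\<zeta> = smul (complex_of_real (r / (2 * h))) w"
  have "cmod (complex_of_real (r / (2 * h))) = r / (2 * h)"
    using h \<open>0 < r\<close> by (simp only: norm_of_real) simp
  then have "hnorm ip \<zeta> = r / 2"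
    using h by (simp add: \<zeta>_def hnorm_smul h_def[symmetric])
  then have "cmod (ip (\<xi>\<^sub>0 + \<zeta>) w) \<le> c" "cmod (ip \<xi>\<^sub>0 w) \<le> c"
    using \<open>0 < r\<close> by (auto intro!: ball)
  then have "cmod (ip \<zeta> w) \<le> 2 * c"
    using norm_triangle_ineq4[of "ip (\<xi>\<^sub>0 + \<zeta>) w" "ip \<xi>\<^sub>0 w"] by (simp add: ip_add_left)
  moreover have "cmod (ip \<zeta> w) = r * h / 2"
  proof -
    have "ip \<zeta> w = complex_of_real (r / (2 * h) * h\<^sup>2)"
      using hnorm_sq[of w] ip_self_real[of w] by (simp add: \<zeta>_def ip_smul_left h_def)
    then have "cmod (ip \<zeta> w) = \<bar>r / (2 * h) * h\<^sup>2\<bar>" by (simp only: norm_of_real)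
    then show ?thesis using h \<open>0 < r\<close> by (simp add: power2_eq_square)
  qed
  ultimately show ?thesis using h \<open>0 < r\<close> by (simp add: h_def field_simps)
qed (use assms in simp)

lemma ball_in_weak_bounds_Baire:
  assumes q_nonneg: "\<And>u. u \<in> U \<Longrightarrow> 0 \<le> q u"
    and pointwise: "\<And>\<xi>. \<exists>\<gamma>. \<forall>u\<in>U. cmod (ip \<xi> (v u)) \<le> \<gamma> * q u"
  shows "\<exists>(n :: nat) \<xi>\<^sub>0. \<exists>r>0. \<forall>\<xi>. hnorm ip (\<xi>\<^sub>0 - \<xi>) < r \<longrightarrow>
           (\<forall>u\<in>U. cmod (ip \<xi> (v u)) \<le> real n * q u)"
proof -
  define F where "F n = {\<xi>. \<forall>u\<in>U. cmod (ip \<xi> (v u)) \<le> real n * q u}" for n :: nat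
  have "\<xi> \<in> \<Union>(range F)" for \<xi>
  proof -
    obtain \<gamma> where "\<forall>u\<in>U. cmod (ip \<xi> (v u)) \<le> \<gamma> * q u" using pointwise by blast
    moreover obtain n :: nat where "\<gamma> \<le> real n" using real_arch_simple by blast
    ultimately have "\<xi> \<in> F n"
      using q_nonneg unfolding F_def by (smt (verit) mem_Collect_eq mult_right_mono)
    then show ?thesis by blast
  qed
  then have "\<Union>(range F) = UNIV" by blast
  then have nonempty: "hmetric.mtopology interior_of \<Union>(range F) \<noteq> {}"
    using interior_of_topspace[of hmetric.mtopology] by simp
  have "\<exists>n. hmetric.mtopology interior_of F n \<noteq> {}"
  proof (rule ccontr)
    assume "\<nexists>n. hmetric.mtopology interior_of F n \<noteq> {}"
    then have "hmetric.mtopology interior_of \<Union>(range F) = {}"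
      by (intro hmetric.metric_Baire_category_alt[OF hmetric_mcomplete])
        (auto simp: F_def closedin_weak_bounds)
    with nonempty show False ..
  qed
  then obtain n \<xi>\<^sub>0 where "\<xi>\<^sub>0 \<in> hmetric.mtopology interior_of F n" by blast
  then obtain r where r: "0 < r" "hmetric.mball \<xi>\<^sub>0 r \<subseteq> hmetric.mtopology interior_of F n"
    using openin_interior_of[of hmetric.mtopology "F n"] unfolding hmetric.openin_mtopology by blast
  have "\<xi> \<in> F n" if "hnorm ip (\<xi>\<^sub>0 - \<xi>) < r" for \<xi>
    using r(2) interior_of_subset[of hmetric.mtopology "F n"] that by (auto simp: hmetric.in_mball)
  then show ?thesis
    using r(1) by (intro exI[of _ n] exI[of _ \<xi>\<^sub>0] exI[of _ r]) (simp add: F_def)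
qed

theorem uniform_boundedness:
  assumes q_nonneg: "\<And>u. u \<in> U \<Longrightarrow> 0 \<le> q u"
    and pointwise: "\<And>\<xi>. \<exists>\<gamma>. \<forall>u\<in>U. cmod (ip \<xi> (v u)) \<le> \<gamma> * q u"
  shows "\<exists>c\<ge>0. \<forall>u\<in>U. hnorm ip (v u) \<le> c * q u"
proof -
  obtain n :: nat and \<xi>\<^sub>0 r where r: "0 < r"
    and ball: "\<And>\<xi> u. hnorm ip (\<xi>\<^sub>0 - \<xi>) < r \<Longrightarrow> u \<in> U \<Longrightarrow> cmod (ip \<xi> (v u)) \<le> real n * q u"
    using ball_in_weak_bounds_Baire[OF q_nonneg pointwise] by blast
  have "hnorm ip (v u) \<le> 4 * real n / r * q u" if u: "u \<in> U" for u
  proof -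
    have "hnorm ip (v u) \<le> 4 * (real n * q u) / r"
      by (rule bound_of_ball_in_weak_bound[OF r _ ball[OF _ u]]) (simp add: q_nonneg[OF u])
    then show ?thesis by simp
  qed
  then show ?thesis using r by (intro exI[of _ "4 * real n / r"]) auto
qed

end

section \<open>Hilbert quasi *-algebras\<close>

locale hilbert_quasi_star_alg = complex_hilbert_space smul ip
  for smul :: "complex \<Rightarrow> 'h::ab_group_add \<Rightarrow> 'h" and ip +
  fixes star :: "'h \<Rightarrow> 'h"
    and mul :: "'h \<Rightarrow> 'h \<Rightarrow> 'h"
    and A0 :: "'h set"
  assumes A0_mul: "x \<in> A0 \<Longrightarrow> y \<in> A0 \<Longrightarrow> mul x y \<in> A0"
    and A0_star: "x \<in> A0 \<Longrightarrow> star x \<in> A0"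
    and A0_dense: "0 < e \<Longrightarrow> \<exists>x\<in>A0. hnorm ip (\<xi> - x) < e"
    and mul_assoc_A0: "x \<in> A0 \<Longrightarrow> y \<in> A0 \<Longrightarrow> z \<in> A0 \<Longrightarrow> mul (mul x y) z = mul x (mul y z)"
    and star_mul_A0: "x \<in> A0 \<Longrightarrow> y \<in> A0 \<Longrightarrow> star (mul x y) = mul (star y) (star x)"
    and star_star [simp]: "star (star \<xi>) = \<xi>"
    and rmul_linear: "x \<in> A0 \<Longrightarrow> clinear_map smul (\<lambda>\<xi>. mul \<xi> x)"
    and rmul_bounded: "x \<in> A0 \<Longrightarrow> hbounded_map ip (\<lambda>\<xi>. mul \<xi> x)"
    and lmul_linear: "x \<in> A0 \<Longrightarrow> clinear_map smul (\<lambda>\<xi>. mul x \<xi>)"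
    and lmul_bounded: "x \<in> A0 \<Longrightarrow> hbounded_map ip (\<lambda>\<xi>. mul x \<xi>)"
    and ip_mul_left_A0: "x \<in> A0 \<Longrightarrow> y \<in> A0 \<Longrightarrow> z \<in> A0 \<Longrightarrow> ip (mul x y) z = ip y (mul (star x) z)"
    and ip_star_A0: "x \<in> A0 \<Longrightarrow> y \<in> A0 \<Longrightarrow> ip x y = ip (star y) (star x)"

lemma hilbert_quasi_star_alg_of_hilbert_quasi_star_algebra:
  assumes "hilbert_quasi_star_algebra smul ip star mul A0"
  shows "hilbert_quasi_star_alg smul ip star mul A0"
  using assms
  unfolding hilbert_quasi_star_algebra_def hilbert_quasi_star_alg_def
    hilbert_quasi_star_alg_axioms_def complex_hilbert_space_def
  by (elim conjE) (intro conjI allI impI; (assumption | blast | metis))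

context hilbert_quasi_star_alg
begin

lemma le_0_by_density:
  assumes "\<And>x. x \<in> A0 \<Longrightarrow> d \<le> K * hnorm ip (\<xi> - x)"
  shows "d \<le> 0"
proof (rule field_le_epsilon)
  fix e :: real assume "0 < e"
  then obtain x where x: "x \<in> A0" "hnorm ip (\<xi> - x) < e / (\<bar>K\<bar> + 1)"
    using A0_dense[of "e / (\<bar>K\<bar> + 1)" \<xi>] by (auto simp: add_nonneg_pos)
  have "d \<le> (\<bar>K\<bar> + 1) * hnorm ip (\<xi> - x)"
    using assms[OF x(1)] by (smt (verit) hnorm_nonneg mult_right_mono)
  also have "\<dots> < e" using x(2) by (simp add: field_simps add_nonneg_pos)
  finally show "d \<le> 0 + e" by simp
qed

lemma map_eq_on_dense:
  assumes "clinear_map smul f" "hbounded_map ip f" "clinear_map smul g" "hbounded_map ip g"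
    and eq: "\<And>x. x \<in> A0 \<Longrightarrow> f x = g x"
  shows "f \<xi> = g \<xi>"
proof -
  obtain C where C: "\<And>a b. hnorm ip (f a - f b) \<le> C * hnorm ip (a - b)"
    using hbounded_map_lipschitz[OF assms(1,2)] by blast
  obtain D where D: "\<And>a b. hnorm ip (g a - g b) \<le> D * hnorm ip (a - b)"
    using hbounded_map_lipschitz[OF assms(3,4)] by blast
  have "hnorm ip (f \<xi> - g \<xi>) \<le> (C + D) * hnorm ip (\<xi> - x)" if "x \<in> A0" for x
  proof -
    have "f \<xi> - g \<xi> = (f \<xi> - f x) - (g \<xi> - g x)" using eq[OF that] by simp
    then have "hnorm ip (f \<xi> - g \<xi>) \<le> hnorm ip (f \<xi> - f x) + hnorm ip (g \<xi> - g x)"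
      using hnorm_diff_le by metis
    then show ?thesis using C[of \<xi> x] D[of \<xi> x] by (simp add: distrib_right)
  qed
  then have "hnorm ip (f \<xi> - g \<xi>) \<le> 0" by (rule le_0_by_density)
  then show ?thesis using hnorm_nonneg[of "f \<xi> - g \<xi>"] by simp
qed

lemma ip_eq_on_dense_left:
  assumes "clinear_map smul f" "hbounded_map ip f" "clinear_map smul g" "hbounded_map ip g"
    and eq: "\<And>x. x \<in> A0 \<Longrightarrow> ip (f x) v = ip (g x) w"
  shows "ip (f \<xi>) v = ip (g \<xi>) w"
proof -
  obtain C where C: "\<And>a b. hnorm ip (f a - f b) \<le> C * hnorm ip (a - b)" "0 \<le> C"
    using hbounded_map_lipschitz[OF assms(1,2)] by blast
  obtain D where D: "\<And>a b. hnorm ip (g a - g b) \<le> D * hnorm ip (a - b)" "0 \<le> D"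
    using hbounded_map_lipschitz[OF assms(3,4)] by blast
  have "cmod (ip (f \<xi>) v - ip (g \<xi>) w) \<le> (C * hnorm ip v + D * hnorm ip w) * hnorm ip (\<xi> - x)"
    if "x \<in> A0" for x
  proof -
    have "ip (f \<xi>) v - ip (g \<xi>) w = ip (f \<xi> - f x) v - ip (g \<xi> - g x) w"
      using eq[OF that] by (simp add: ip_diff_left)
    also have "cmod \<dots> \<le> hnorm ip (f \<xi> - f x) * hnorm ip v + hnorm ip (g \<xi> - g x) * hnorm ip w"
      by (rule cmod_ip_diff_le)
    also have "\<dots> \<le> (C * hnorm ip (\<xi> - x)) * hnorm ip v + (D * hnorm ip (\<xi> - x)) * hnorm ip w"
      using C D by (intro add_mono mult_right_mono) auto
    finally show ?thesis by (simp add: algebra_simps)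
  qed
  then have "cmod (ip (f \<xi>) v - ip (g \<xi>) w) \<le> 0" by (rule le_0_by_density)
  then show ?thesis by simp
qed

lemma ip_eq_on_dense:
  assumes "clinear_map smul f1" "hbounded_map ip f1" "clinear_map smul g1" "hbounded_map ip g1"
    and "clinear_map smul f2" "hbounded_map ip f2" "clinear_map smul g2" "hbounded_map ip g2"
    and eq: "\<And>x y. x \<in> A0 \<Longrightarrow> y \<in> A0 \<Longrightarrow> ip (f1 x) (g1 y) = ip (f2 x) (g2 y)"
  shows "ip (f1 \<xi>) (g1 \<eta>) = ip (f2 \<xi>) (g2 \<eta>)"
proof -
  have left: "ip (f1 \<xi>) (g1 y) = ip (f2 \<xi>) (g2 y)" if "y \<in> A0" for y
    using eq[OF _ that] by (rule ip_eq_on_dense_left[OF assms(1,2,5,6)])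
  have "ip (g1 y) (f1 \<xi>) = ip (g2 y) (f2 \<xi>)" if "y \<in> A0" for y
    using left[OF that] ip_cnj_commute[of "f1 \<xi>" "g1 y"] ip_cnj_commute[of "f2 \<xi>" "g2 y"]
    by simp
  then have "ip (g1 \<eta>) (f1 \<xi>) = ip (g2 \<eta>) (f2 \<xi>)"
    by (rule ip_eq_on_dense_left[OF assms(3,4,7,8)])
  then show ?thesis
    using ip_cnj_commute[of "g1 \<eta>" "f1 \<xi>"] ip_cnj_commute[of "g2 \<eta>" "f2 \<xi>"] by simp
qed

lemma ip_mul_left: "x \<in> A0 \<Longrightarrow> ip (mul x \<xi>) \<eta> = ip \<xi> (mul (star x) \<eta>)"
  using ip_eq_on_dense[of "mul x" "\<lambda>\<eta>. \<eta>" "\<lambda>\<xi>. \<xi>" "mul (star x)"]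
  by (simp add: ip_mul_left_A0 A0_star lmul_linear lmul_bounded clinear_map_id hbounded_map_id)

lemma ip_mul_right_A0:
  assumes x: "x \<in> A0" and y: "y \<in> A0" and z: "z \<in> A0"
  shows "ip (mul x y) z = ip x (mul z (star y))"
proof -
  have "ip (mul x y) z = ip (star z) (mul (star y) (star x))"
    using assms by (simp add: ip_star_A0 A0_mul star_mul_A0)
  also have "\<dots> = cnj (ip (star x) (mul y (star z)))"
    using ip_mul_left_A0[OF A0_star[OF y] A0_star[OF x] A0_star[OF z]]
      ip_cnj_commute[of "star z"] by simp
  also have "\<dots> = ip (mul y (star z)) (star x)"
    using ip_cnj_commute[of "mul y (star z)" "star x"] by simp
  also have "\<dots> = ip x (mul z (star y))"
    using ip_star_A0[OF A0_mul[OF y A0_star[OF z]] A0_star[OF x]] by (simp add: star_mul_A0 y z A0_star)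
  finally show ?thesis .
qed

lemma ip_mul_right: "y \<in> A0 \<Longrightarrow> ip (mul \<xi> y) \<eta> = ip \<xi> (mul \<eta> (star y))"
  using ip_eq_on_dense[of "\<lambda>\<xi>. mul \<xi> y" "\<lambda>\<eta>. \<eta>" "\<lambda>\<xi>. \<xi>" "\<lambda>\<eta>. mul \<eta> (star y)"]
  by (simp add: ip_mul_right_A0 A0_star rmul_linear rmul_bounded clinear_map_id hbounded_map_id)

lemma mul_assoc_right:
  assumes x: "x \<in> A0" and y: "y \<in> A0"
  shows "mul (mul \<xi> x) y = mul \<xi> (mul x y)"
proof (rule map_eq_on_dense[where f = "\<lambda>\<xi>. mul (mul \<xi> x) y" and g = "\<lambda>\<xi>. mul \<xi> (mul x y)"])
  show "clinear_map smul (\<lambda>\<xi>. mul (mul \<xi> x) y)"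
    by (rule clinear_map_comp[OF rmul_linear[OF x] rmul_linear[OF y]])
  show "hbounded_map ip (\<lambda>\<xi>. mul (mul \<xi> x) y)"
    by (rule hbounded_map_comp[OF rmul_bounded[OF x] rmul_bounded[OF y]])
qed (simp_all add: x y rmul_linear rmul_bounded A0_mul mul_assoc_A0)

section \<open>Positivity and representable functionals\<close>

lemma cnonneg_on_H_plus:
  assumes "additive F"
    and lip: "\<And>a b. cmod (F a - F b) \<le> K * hnorm ip (a - b)"
    and pos: "\<And>y. y \<in> A0 \<Longrightarrow> cnonneg (F (mul (star y) y))"
    and \<eta>: "\<eta> \<in> H_plus ip star mul A0"
  shows "cnonneg (F \<eta>)"
proof (rule cnonneg_of_approx)
  fix e :: real assume "0 < e"
  then have "0 < e / (\<bar>K\<bar> + 1)" by (simp add: add_nonneg_pos)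
  then obtain a where a: "a \<in> A0_plus star mul A0" "hnorm ip (\<eta> - a) < e / (\<bar>K\<bar> + 1)"
    using \<eta> unfolding H_plus_def by blast
  then have "cnonneg (F a)"
    using pos by (auto simp: A0_plus_def intro!: cnonneg_sum_list[OF assms(1)])
  moreover have "cmod (F \<eta> - F a) \<le> (\<bar>K\<bar> + 1) * hnorm ip (\<eta> - a)"
    using lip[of \<eta> a] by (smt (verit) hnorm_nonneg mult_right_mono)
  then have "cmod (F \<eta> - F a) < e"
    using a(2) by (simp add: field_simps add_nonneg_pos)
  ultimately show "\<exists>z. cnonneg z \<and> cmod (F \<eta> - z) < e" by blast
qed

lemma H_plus_subset_H_plus_w: "H_plus ip star mul A0 \<subseteq> H_plus_w ip mul A0"
proof
  fix \<xi> assume \<xi>: "\<xi> \<in> H_plus ip star mul A0"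
  have "cnonneg (ip (mul \<xi> x) x)" if x: "x \<in> A0" for x
  proof -
    obtain C where C: "\<And>a b. hnorm ip (mul a x - mul b x) \<le> C * hnorm ip (a - b)" "0 \<le> C"
      using hbounded_map_lipschitz[OF rmul_linear[OF x] rmul_bounded[OF x]] by blast
    show ?thesis
    proof (rule cnonneg_on_H_plus[OF _ _ _ \<xi>, where F = "\<lambda>\<xi>. ip (mul \<xi> x) x"])
      show "additive (\<lambda>\<xi>. ip (mul \<xi> x) x)"
        using rmul_linear[OF x] by unfold_locales (simp add: clinear_map_def ip_add_left)
      show "cmod (ip (mul a x) x - ip (mul b x) x) \<le> (C * hnorm ip x) * hnorm ip (a - b)" for a b
        using order_trans[OF cauchy_schwarz mult_right_mono[OF C(1) hnorm_nonneg]]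
        by (simp add: ip_diff_left[symmetric] mult_ac)
      show "cnonneg (ip (mul (mul (star y) y) x) x)" if y: "y \<in> A0" for y
        using cnonneg_ip_self[of "mul y x"] ip_mul_left[OF A0_star[OF y], of "mul y x" x]
        by (simp add: mul_assoc_A0 A0_star x y)
    qed
  qed
  then show "\<xi> \<in> H_plus_w ip mul A0" by (simp add: H_plus_w_def)
qed

lemma cnonneg_ip_H_plus_w_H_plus:
  assumes \<xi>: "\<xi> \<in> H_plus_w ip mul A0" and x: "x \<in> A0" and \<eta>: "\<eta> \<in> H_plus ip star mul A0"
  shows "cnonneg (ip (mul (star x) (mul \<xi> x)) \<eta>)"
proof (rule cnonneg_on_H_plus[OF additive_ip_right _ _ \<eta>])
  fix a b
  show "cmod (ip (mul (star x) (mul \<xi> x)) a - ip (mul (star x) (mul \<xi> x)) b)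
      \<le> hnorm ip (mul (star x) (mul \<xi> x)) * hnorm ip (a - b)"
    using cauchy_schwarz by (metis ip_diff_right)
next
  fix y assume y: "y \<in> A0"
  have "ip (mul (star x) (mul \<xi> x)) (mul (star y) y) = ip (mul \<xi> x) (mul (mul x (star y)) y)"
    using ip_mul_left[OF A0_star[OF x]] by (simp add: mul_assoc_A0 x y A0_star)
  also have "\<dots> = ip (mul \<xi> (mul x (star y))) (mul x (star y))"
    using ip_mul_right[OF A0_star[OF y], of "mul \<xi> x" "mul x (star y)"]
    by (simp add: mul_assoc_right x y A0_star)
  finally show "cnonneg (ip (mul (star x) (mul \<xi> x)) (mul (star y) y))"
    using \<xi> by (simp add: H_plus_w_def A0_mul A0_star x y)
qed

lemma Rc_representing_vector:
  assumes "\<omega> \<in> Rc smul ip star mul A0"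
  shows "\<exists>\<eta>. \<forall>\<zeta>. \<omega> \<zeta> = ip \<zeta> \<eta>"
proof -
  obtain C where "\<And>\<xi>. cmod (\<omega> \<xi>) \<le> C * hnorm ip \<xi>"
    using assms by (auto simp: Rc_def)
  with assms show ?thesis
    by (intro riesz_representation[where C = C]) (auto simp: Rc_def representable_def)
qed

lemma representing_vector_in_H_plus_wb:
  assumes \<omega>: "\<omega> \<in> Rc smul ip star mul A0" and \<eta>: "\<And>\<zeta>. \<omega> \<zeta> = ip \<zeta> \<eta>"
  shows "\<eta> \<in> H_plus_wb ip mul A0"
proof -
  have L1: "\<And>x. x \<in> A0 \<Longrightarrow> cnonneg (\<omega> (mul (star x) x))"
    and L3: "\<And>\<xi>. \<exists>\<gamma>>0. \<forall>x\<in>A0. cmod (\<omega> (mul (star \<xi>) x)) \<le> \<gamma> * sqrt (Re (\<omega> (mul (star x) x)))"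
    using \<omega> by (auto simp: Rc_def representable_def)
  have \<omega>_mul: "\<omega> (mul u (star u)) = cnj (ip (mul \<eta> u) u)" if "u \<in> A0" for u
    using ip_mul_right[OF that, of \<eta> u] ip_cnj_commute[of "mul u (star u)" \<eta>] by (simp add: \<eta>)
  have pos: "cnonneg (ip (mul \<eta> u) u)" if u: "u \<in> A0" for u
    using L1[OF A0_star[OF u]] \<omega>_mul[OF u] by (simp add: cnonneg_cnj)
  define q where "q u = sqrt (Re (ip (mul \<eta> u) u))" for u
  have "\<exists>\<gamma>. \<forall>u\<in>A0. cmod (ip \<xi> (mul \<eta> u)) \<le> \<gamma> * q u" for \<xi>
  proof -
    obtain \<gamma> where \<gamma>: "\<forall>x\<in>A0. cmod (\<omega> (mul \<xi> x)) \<le> \<gamma> * sqrt (Re (\<omega> (mul (star x) x)))"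
      using L3[of "star \<xi>"] by auto
    have "cmod (ip \<xi> (mul \<eta> u)) \<le> \<gamma> * q u" if u: "u \<in> A0" for u
      using \<gamma>[rule_format, OF A0_star[OF u]] \<omega>_mul[OF u] ip_mul_right[OF A0_star[OF u], of \<xi> \<eta>]
      by (simp add: \<eta> q_def)
    then show ?thesis by blast
  qed
  then obtain c where "0 \<le> c" and c: "\<And>u. u \<in> A0 \<Longrightarrow> hnorm ip (mul \<eta> u) \<le> c * q u"
    using uniform_boundedness[of A0 q "mul \<eta>"] pos by (auto simp: q_def cnonneg_def)
  have "hnorm ip (mul \<eta> u) \<le> c\<^sup>2 * hnorm ip u" if u: "u \<in> A0" for u
  proof (rule le_sq_mult_of_le_sqrt)
    show "Re (ip (mul \<eta> u) u) \<le> hnorm ip (mul \<eta> u) * hnorm ip u"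
      using complex_Re_le_cmod cauchy_schwarz order_trans by blast
  qed (use \<open>0 \<le> c\<close> c[OF u] pos[OF u] in \<open>auto simp: q_def cnonneg_def\<close>)
  with pos show ?thesis by (auto simp: H_plus_wb_def bounded_elems_def)
qed

theorem H_plus_eq_H_plus_w:
  assumes P: "condition_P smul ip star mul A0"
    and wb: "H_plus_wb ip mul A0 \<subseteq> H_plus ip star mul A0"
  shows "H_plus ip star mul A0 = H_plus_w ip mul A0"
proof
  show "H_plus_w ip mul A0 \<subseteq> H_plus ip star mul A0"
  proof
    fix \<xi> assume \<xi>: "\<xi> \<in> H_plus_w ip mul A0"
    have "cnonneg (\<omega> (mul (star x) (mul \<xi> x)))"
      if \<omega>: "\<omega> \<in> Rc smul ip star mul A0" and x: "x \<in> A0" for \<omega> x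
    proof -
      obtain \<eta> where \<eta>: "\<And>\<zeta>. \<omega> \<zeta> = ip \<zeta> \<eta>" using Rc_representing_vector[OF \<omega>] by blast
      then have "\<eta> \<in> H_plus ip star mul A0"
        using representing_vector_in_H_plus_wb[OF \<omega>] wb by blast
      then show ?thesis using cnonneg_ip_H_plus_w_H_plus[OF \<xi> x] by (simp add: \<eta>)
    qed
    with P show "\<xi> \<in> H_plus ip star mul A0" by (simp add: condition_P_def)
  qed
qed (rule H_plus_subset_H_plus_w)

end

theorem mainTheorem14:
  fixes smul :: "complex \<Rightarrow> 'h::ab_group_add \<Rightarrow> 'h"
    and ip :: "'h \<Rightarrow> 'h \<Rightarrow> complex"
    and star :: "'h \<Rightarrow> 'h"
    and mul :: "'h \<Rightarrow> 'h \<Rightarrow> 'h"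
    and A0 :: "'h set"
  assumes "hilbert_quasi_star_algebra smul ip star mul A0"
    and "condition_P smul ip star mul A0"
    and "H_plus_wb ip mul A0 \<subseteq> H_plus ip star mul A0"
  shows "H_plus ip star mul A0 = H_plus_w ip mul A0"
proof -
  interpret hilbert_quasi_star_alg smul ip star mul A0
    using assms(1) by (rule hilbert_quasi_star_alg_of_hilbert_quasi_star_algebra)
  show ?thesis using assms(2,3) by (rule H_plus_eq_H_plus_w)
qed

end
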